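(* Let $n\ge 1$ be an integer and consider the control system with state $(x_n,z_{n-1},\dots,z_1,z_0)\in\mathbb{R}^{n+1}$ and scalar control $v(t)$: $$\dot x_n=v-x_n,\qquad \dot z_{n-1}=v,\qquad \dot z_k=z_{k+1}\ (0\le k\le n-2),$$ together with the running cost $\frac12\big[(z_0-x_1)^2+x_1^2\big]$, where $$x_1:=\sum_{k=1}^{n-1}(-1)^{k+1}z_k+(-1)^{n+1}x_n$$ (for $n=1$, $x_1$ is simply the state $x_n$). Let $p_n,p_{n-1},\dots,p_0$ be adjoint variables associated respectively with $x_n,z_{n-1},\dots,z_0$, with Pontryagin Hamiltonian $$H_S=p_n(v-x_n)+p_{n-1}v+p_{n-2}z_{n-1}+\dots+p_0z_1-\tfrac12\big[(z_0-x_1)^2+x_1^2\big]$$ (the terms $p_{k-1}z_k$ being absent when $n=1$), and adjoint equations $\dot p_n=-\partial H_S/\partial x_n$, $\dot p_{k}=-\partial H_S/\partial z_k$, i.e. $$\dot p_n=p_n+(-1)^{n+1}(2x_1-z_0),\quad \dot p_k=-p_{k-1}+(-1)^{k+1}(2x_1-z_0)\ (1\le k\le n-1),\quad \dot p_0=z_0-x_1 .$$ Suppose that on an open time interval $I$ a solution of these state and adjoint equations, with a continuous control $v$, satisfies the singularity condition $\partial H_S/\partial v=p_n+p_{n-1}=0$ identically on $I$. Then on $I$ one has $z_0=z_1=\dots=z_{n-1}=v$, and there are constants $Y,Z\in\mathbb{R}$ such that for all $t\in I$ $$z_0(t)=\dots=z_{n-1}(t)=v(t)=Ze^{t},\qquad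 x_n(t)=Ye^{-t}+Z\sinh(t).$$ In particular the singular control $v=Ze^t$ has the same form for every $n$.
   Context: This system arises from the scalar dynamics $\dot x+x=u$ by setting $x_k=x^{(k)}$, $z_k=u^{(k)}$, $v=u^{(n)}$, so that the cost integrand $(z_0-x_1)^2+x_1^2$ equals $x^2+\dot x^2$. For $n=1$, write $y=x_1$, $z=z_0$; the system is $\dot y=v-y$, $\dot z=v$ with cost $\int[(z-y)^2+y^2]dt$. *)

theory Defs
  imports "HOL-Analysis.Analysis"
begin

definition x1_of :: "nat \<Rightarrow> (nat \<Rightarrow> real \<Rightarrow> real) \<Rightarrow> (real \<Rightarrow> real) \<Rightarrow> real \<Rightarrow> real" where
  "x1_of n z xn t = (\<Sum>k=1..n-1. (-1)^(k+1) * z k t) + (-1)^(n+1) * xn t"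

end

theory Submission
  imports Defs
begin

text \<open>Differentiating the singularity condition p_n + p_(n-1) = 0 repeatedly and using the
  adjoint equations eliminates the costates one by one: p_n + (-1)^j p_(n-1-j) = 0 for all j,
  and one more derivative gives p_n = (-1)^n x_1. Differentiating this identity once more and
  comparing with the telescoping derivative of x_1 yields z_1 = z_0 (or v = z_0 if n = 1); each
  further derivative pushes the equality up the chain z_0 = z_1 = ... = z_(n-1) = v.
  Then z_0' = z_0 and x_n' = Z e^t - x_n are solved explicitly.\<close>

lemma DERIV_unique_on_open:
  assumes "open I" "t \<in> I" "\<And>s. s \<in> I \<Longrightarrow> f s = g s"
    and "(f has_real_derivative a) (at t)" "(g has_real_derivative b) (at t)"
  shows "a = b"
proof -
  have "(g has_real_derivative a) (at t)"
    using has_field_derivative_transform_within_open[OF assms(4) assms(1,2)] assms(3) by auto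
  then show ?thesis
    using assms(5) DERIV_unique by blast
qed

lemma DERIV_zero_imp_constant_on_interval:
  fixes f :: "real \<Rightarrow> real"
  assumes "is_interval I" "\<And>t. t \<in> I \<Longrightarrow> (f has_real_derivative 0) (at t)"
  shows "\<exists>c. \<forall>t\<in>I. f t = c"
  using has_field_derivative_zero_constant[OF is_interval_convex[OF assms(1)]]
    assms(2) has_field_derivative_at_within by blast

lemma DERIV_eq_self_imp_exp:
  fixes f :: "real \<Rightarrow> real"
  assumes "is_interval I" "\<And>t. t \<in> I \<Longrightarrow> (f has_real_derivative f t) (at t)"
  shows "\<exists>Z. \<forall>t\<in>I. f t = Z * exp t"
proof -
  have "\<exists>Z. \<forall>t\<in>I. f t * exp (- t) = Z"
  proof (rule DERIV_zero_imp_constant_on_interval[OF assms(1)])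
    fix t assume "t \<in> I"
    then have "((\<lambda>t. f t * exp (- t)) has_real_derivative
        f t * exp (- t) + f t * (exp (- t) * - 1)) (at t)"
      using assms(2) by (auto intro!: derivative_eq_intros)
    then show "((\<lambda>t. f t * exp (- t)) has_real_derivative 0) (at t)"
      by simp
  qed
  then show ?thesis
    by (metis exp_minus_inverse mult.assoc mult.commute mult_1_right)
qed

lemma DERIV_exp_forced_imp_sinh:
  fixes x :: "real \<Rightarrow> real"
  assumes "is_interval I"
    and "\<And>t. t \<in> I \<Longrightarrow> (x has_real_derivative Z * exp t - x t) (at t)"
  shows "\<exists>Y. \<forall>t\<in>I. x t = Y * exp (- t) + Z * sinh t"
proof -
  have "\<exists>Y. \<forall>t\<in>I. (x t - Z * sinh t) * exp t = Y"
  proof (rule DERIV_zero_imp_constant_on_interval[OF assms(1)])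
    fix t assume "t \<in> I"
    then have "((\<lambda>t. (x t - Z * sinh t) * exp t) has_real_derivative
        (Z * exp t - x t - Z * cosh t) * exp t + (x t - Z * sinh t) * exp t) (at t)"
      using assms(2) by (auto intro!: derivative_eq_intros)
    moreover have "(Z * exp t - x t - Z * cosh t) * exp t + (x t - Z * sinh t) * exp t = 0"
      by (simp add: algebra_simps flip: cosh_plus_sinh)
    ultimately show "((\<lambda>t. (x t - Z * sinh t) * exp t) has_real_derivative 0) (at t)"
      by simp
  qed
  then obtain Y where "\<forall>t\<in>I. (x t - Z * sinh t) * exp t = Y" ..
  then have "\<forall>t\<in>I. x t = Y * exp (- t) + Z * sinh t"
    by (auto simp: exp_minus field_simps)
  then show ?thesis ..
qed

lemma alternating_sum_telescope:
  fixes f :: "nat \<Rightarrow> real"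
  shows "(\<Sum>k=1..m. (-1)^(k+1) * f (k+1)) + (\<Sum>k=1..m. (-1)^(k+1) * f k)
           = f 1 + (-1)^(m+1) * f (m+1)"
  by (induction m) (simp_all add: sum.distrib algebra_simps)

text \<open>Here w extends z by w n = v, so the state equations read w_k' = w_(k+1) for k < n.\<close>

lemma x1_of_has_derivative:
  assumes "n \<ge> 1"
    and dw: "\<And>k. k < n \<Longrightarrow> (w k has_real_derivative w (Suc k) t) (at t)"
    and dx: "(xn has_real_derivative w n t - xn t) (at t)"
  shows "(x1_of n w xn has_real_derivative w 1 t - x1_of n w xn t) (at t)"
proof -
  obtain m where n: "n = Suc m"
    using assms(1) by (cases n) auto
  have "(x1_of n w xn has_real_derivative
      (\<Sum>k=1..m. (-1)^(k+1) * w (k+1) t) + (-1)^(n+1) * (w n t - xn t)) (at t)"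
    unfolding x1_of_def[abs_def] using dw dx
    by (auto simp: n intro!: derivative_eq_intros sum.cong)
  moreover have "(\<Sum>k=1..m. (-1)^(k+1) * w (k+1) t) + (-1)^(n+1) * (w n t - xn t)
      = w 1 t - x1_of n w xn t"
    using alternating_sum_telescope[where m = m and f = "\<lambda>k. w k t"] by (simp add: x1_of_def n algebra_simps)
  ultimately show ?thesis
    by simp
qed

text \<open>The adjoint equations with the common forcing term 2 x_1 - z_0 abstracted to r and the
  right-hand side of p_0' abstracted to s.\<close>

lemma singular_costate_alternating:
  fixes p :: "nat \<Rightarrow> real \<Rightarrow> real"
  assumes "open I" and n: "n = Suc m"
    and dp_n: "\<And>t. t \<in> I \<Longrightarrow> (p n has_real_derivative p n t + (-1)^(n+1) * r t) (at t)"
    and dp_k: "\<And>k t. 1 \<le> k \<Longrightarrow> k \<le> n - 1 \<Longrightarrow> t \<in> I \<Longrightarrow>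
                 (p k has_real_derivative - p (k-1) t + (-1)^(k+1) * r t) (at t)"
    and singular: "\<And>t. t \<in> I \<Longrightarrow> p n t + p (n-1) t = 0"
    and "j \<le> m" "t \<in> I"
  shows "p n t + (-1)^j * p (m - j) t = 0"
  using assms(6,7)
proof (induction j arbitrary: t)
  case 0
  then show ?case
    using singular by (simp add: n)
next
  case (Suc j)
  define k where "k = m - j"
  have k: "1 \<le> k" "k \<le> n - 1" "m - Suc j = k - 1"
    using Suc.prems by (auto simp: k_def n)
  have sign: "(-1::real)^j * ((-1)^(k+1) * r t) = - ((-1)^(n+1) * r t)"
    using Suc.prems by (simp add: k_def n flip: power_add)
  have "p n t + (-1)^(n+1) * r t + (-1)^j * (- p (k-1) t + (-1)^(k+1) * r t)
      = p n t + (-1)^Suc j * p (m - Suc j) t"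
    by (simp only: distrib_left sign k(3)) simp
  moreover have "p n t + (-1)^(n+1) * r t + (-1)^j * (- p (k-1) t + (-1)^(k+1) * r t) = 0"
  proof (rule DERIV_unique_on_open[OF \<open>open I\<close> \<open>t \<in> I\<close>])
    show "((\<lambda>s. p n s + (-1)^j * p k s) has_real_derivative
        p n t + (-1)^(n+1) * r t + (-1)^j * (- p (k-1) t + (-1)^(k+1) * r t)) (at t)"
      using dp_n dp_k k Suc.prems by (auto intro!: derivative_eq_intros)
    show "((\<lambda>s. 0) has_real_derivative 0) (at t)"
      by simp
    show "p n s + (-1)^j * p k s = 0" if "s \<in> I" for s
      using Suc.IH Suc.prems that by (simp add: k_def)
  qed
  ultimately show ?case
    by simp
qed

lemma singular_costate_eq:
  fixes p :: "nat \<Rightarrow> real \<Rightarrow> real"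
  assumes "open I" "n \<ge> 1"
    and dp_n: "\<And>t. t \<in> I \<Longrightarrow> (p n has_real_derivative p n t + (-1)^(n+1) * r t) (at t)"
    and dp_k: "\<And>k t. 1 \<le> k \<Longrightarrow> k \<le> n - 1 \<Longrightarrow> t \<in> I \<Longrightarrow>
                 (p k has_real_derivative - p (k-1) t + (-1)^(k+1) * r t) (at t)"
    and dp_0: "\<And>t. t \<in> I \<Longrightarrow> (p 0 has_real_derivative s t) (at t)"
    and singular: "\<And>t. t \<in> I \<Longrightarrow> p n t + p (n-1) t = 0"
    and "t \<in> I"
  shows "p n t = (-1)^n * (r t + s t)"
proof -
  obtain m where n: "n = Suc m"
    using assms(2) by (cases n) auto
  have "p n t + (-1)^(n+1) * r t + (-1)^m * s t = 0"
  proof (rule DERIV_unique_on_open[OF \<open>open I\<close> \<open>t \<in> I\<close>])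
    show "((\<lambda>u. p n u + (-1)^m * p 0 u) has_real_derivative
        p n t + (-1)^(n+1) * r t + (-1)^m * s t) (at t)"
      using dp_n dp_0 \<open>t \<in> I\<close> by (auto intro!: derivative_eq_intros)
    show "((\<lambda>u. 0) has_real_derivative 0) (at t)"
      by simp
    show "p n u + (-1)^m * p 0 u = 0" if "u \<in> I" for u
      using singular_costate_alternating[OF assms(1) n dp_n dp_k singular order.refl that]
      by simp
  qed
  then show ?thesis
    by (simp add: n algebra_simps)
qed

lemma singular_arc_x1_derivative:
  fixes p :: "nat \<Rightarrow> real \<Rightarrow> real"
  assumes "open I" "n \<ge> 1"
    and dx1: "\<And>t. t \<in> I \<Longrightarrow> (x1 has_real_derivative y t - x1 t) (at t)"
    and dp_n: "\<And>t. t \<in> I \<Longrightarrow> (p n has_real_derivative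
                 p n t + (-1)^(n+1) * (2 * x1 t - z0 t)) (at t)"
    and dp_k: "\<And>k t. 1 \<le> k \<Longrightarrow> k \<le> n - 1 \<Longrightarrow> t \<in> I \<Longrightarrow> (p k has_real_derivative
                 - p (k-1) t + (-1)^(k+1) * (2 * x1 t - z0 t)) (at t)"
    and dp_0: "\<And>t. t \<in> I \<Longrightarrow> (p 0 has_real_derivative z0 t - x1 t) (at t)"
    and singular: "\<And>t. t \<in> I \<Longrightarrow> p n t + p (n-1) t = 0"
    and "t \<in> I"
  shows "y t = z0 t"
proof -
  have pn: "p n s = (-1)^n * x1 s" if "s \<in> I" for s
    using singular_costate_eq[OF assms(1,2) dp_n dp_k dp_0 singular that] by simp
  have d: "((\<lambda>s. (-1)^n * x1 s) has_real_derivative (-1)^n * (y t - x1 t)) (at t)"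
    using dx1[OF \<open>t \<in> I\<close>] by (rule DERIV_cmult)
  have "p n t + (-1)^(n+1) * (2 * x1 t - z0 t) = (-1)^n * (y t - x1 t)"
    by (rule DERIV_unique_on_open[OF \<open>open I\<close> \<open>t \<in> I\<close> _ dp_n[OF \<open>t \<in> I\<close>] d]) (rule pn)
  then have "(-1)^n * (z0 t - x1 t) = (-1)^n * (y t - x1 t)"
    using pn[OF \<open>t \<in> I\<close>] by (simp add: algebra_simps)
  then show ?thesis
    by simp
qed

lemma DERIV_chain_eq_first:
  assumes "open I"
    and dw: "\<And>k t. k < n \<Longrightarrow> t \<in> I \<Longrightarrow> (w k has_real_derivative w (Suc k) t) (at t)"
    and w10: "\<And>t. t \<in> I \<Longrightarrow> w 1 t = w 0 t"
    and "k \<le> n" "t \<in> I"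
  shows "w k t = w 0 t"
proof -
  have step: "w (Suc k) t = w k t" if "k < n" "t \<in> I" for k t
    using that
  proof (induction k arbitrary: t)
    case 0
    then show ?case
      using w10 by simp
  next
    case (Suc k)
    then have "w (Suc k) s = w k s" if "s \<in> I" for s
      using that by simp
    then show ?case
      using DERIV_unique_on_open[OF \<open>open I\<close> \<open>t \<in> I\<close> _ dw[of k t] dw[of "Suc k" t]] Suc.prems
      by (metis Suc_lessD)
  qed
  show ?thesis
    using \<open>k \<le> n\<close>
  proof (induction k)
    case (Suc k)
    then show ?case
      using step[OF _ \<open>t \<in> I\<close>, of k] by simp
  qed simp
qed

theorem mainTheorem1:
  fixes n :: nat
    and I :: "real set"
    and xn v :: "real \<Rightarrow> real"
    and z p :: "nat \<Rightarrow> real \<Rightarrow> real"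
  assumes n_ge: "n \<ge> 1"
    and I_open: "open I" and I_interval: "is_interval I" and I_ne: "I \<noteq> {}"
    and v_cont: "continuous_on I v"
    and dx: "\<And>t. t \<in> I \<Longrightarrow> (xn has_real_derivative (v t - xn t)) (at t)"
    and dz_top: "\<And>t. t \<in> I \<Longrightarrow> (z (n-1) has_real_derivative v t) (at t)"
    and dz: "\<And>k t. k + 2 \<le> n \<Longrightarrow> t \<in> I \<Longrightarrow> (z k has_real_derivative z (k+1) t) (at t)"
    and dp_n: "\<And>t. t \<in> I \<Longrightarrow> (p n has_real_derivative
                 (p n t + (-1)^(n+1) * (2 * x1_of n z xn t - z 0 t))) (at t)"
    and dp_k: "\<And>k t. 1 \<le> k \<Longrightarrow> k \<le> n - 1 \<Longrightarrow> t \<in> I \<Longrightarrow> (p k has_real_derivative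
                 (- p (k-1) t + (-1)^(k+1) * (2 * x1_of n z xn t - z 0 t))) (at t)"
    and dp_0: "\<And>t. t \<in> I \<Longrightarrow> (p 0 has_real_derivative (z 0 t - x1_of n z xn t)) (at t)"
    and singular: "\<And>t. t \<in> I \<Longrightarrow> p n t + p (n-1) t = 0"
  shows "\<exists>Y Z :: real. \<forall>t\<in>I.
           (\<forall>k<n. z k t = v t) \<and> v t = Z * exp t \<and>
           xn t = Y * exp (- t) + Z * sinh t"
proof -
  define w where "w = z(n := v)"
  define x1 where "x1 = x1_of n z xn"
  have dw: "(w k has_real_derivative w (Suc k) t) (at t)" if "k < n" "t \<in> I" for k t
    using that dz[of k t] dz_top[of t] by (cases "Suc k = n") (auto simp: w_def)
  have x1_w: "x1_of n w xn = x1"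
    unfolding x1_def x1_of_def w_def by (intro ext arg_cong2[where f = "(+)"] sum.cong) auto
  have dx1: "(x1 has_real_derivative w 1 t - x1 t) (at t)" if "t \<in> I" for t
  proof -
    have "(x1_of n w xn has_real_derivative w 1 t - x1_of n w xn t) (at t)"
      by (rule x1_of_has_derivative[OF n_ge]) (use dw dx that in \<open>auto simp: w_def\<close>)
    then show ?thesis
      by (simp add: x1_w)
  qed
  have w10: "w 1 t = w 0 t" if "t \<in> I" for t
    using singular_arc_x1_derivative[OF I_open n_ge dx1 dp_n[folded x1_def] dp_k[folded x1_def]
        dp_0[folded x1_def] singular that] n_ge
    by (simp add: w_def)
  have w0: "w 0 = z 0"
    using n_ge by (simp add: w_def)
  have w_eq: "w k t = z 0 t" if "k \<le> n" "t \<in> I" for k t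
    using DERIV_chain_eq_first[OF I_open dw w10 that] by (simp add: w0)
  have "(z 0 has_real_derivative z 0 t) (at t)" if "t \<in> I" for t
    using dw[of 0 t] w10[of t] n_ge that by (simp add: w0)
  then obtain Z where Z: "\<forall>t\<in>I. z 0 t = Z * exp t"
    using DERIV_eq_self_imp_exp[OF I_interval] by blast
  have v: "v t = Z * exp t" if "t \<in> I" for t
    using w_eq[of n t] Z that by (simp add: w_def)
  have "(xn has_real_derivative Z * exp t - xn t) (at t)" if "t \<in> I" for t
    using dx[OF that] v[OF that] by simp
  then obtain Y where Y: "\<forall>t\<in>I. xn t = Y * exp (- t) + Z * sinh t"
    using DERIV_exp_forced_imp_sinh[OF I_interval] by blast
  have "z k t = v t" if "k < n" "t \<in> I" for k t
    using w_eq[of k t] w_eq[of n t] that by (simp add: w_def)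
  then show ?thesis
    using v Y by blast
qed

end
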